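(* Let $V$ be a finite-dimensional scalar product space and $T$ a self-adjoint operator on $V$. Fix an eigenvalue $\lambda$ of $T$ and let $U=(T-\lambda I)|_{K_\lambda}$. If $k\ge 0$ is an integer with $U^k\neq 0$, then there exists $x\in K_\lambda$ such that $\langle U^k x,x\rangle\neq 0$.
   Context: A scalar product is a non-degenerate symmetric bilinear form $\langle\cdot,\cdot\rangle$ over $\mathbb{R}$ or $\mathbb{C}$ (bilinear, not Hermitian, in the complex case). $T$ is self-adjoint if $\langle Tx,y\rangle=\langle x,Ty\rangle$ for all $x,y$. If $V$ is real, eigenvalues (possibly non-real) and generalized eigenspaces are taken in the complexification $V^{\mathbb{C}}$ with the complex-bilinear extension of the scalar product and of $T$. The generalized eigenspace is $K_\lambda=\{x:(T-\lambda I)^m x=0\text{ for some positive integer }m\}$. *)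

theory Defs
  imports "HOL-Analysis.Analysis"
begin

text \<open>A finite-dimensional complex vector space is modelled as complex^'n.
  A scalar product is a non-degenerate symmetric (complex-)bilinear form.\<close>

definition scalar_product :: "(complex^'n \<Rightarrow> complex^'n \<Rightarrow> complex) \<Rightarrow> bool" where
  "scalar_product B \<longleftrightarrow>
     (\<forall>x y z. B (x + y) z = B x z + B y z) \<and>
     (\<forall>c x y. B (c *s x) y = c * B x y) \<and>
     (\<forall>x y. B x y = B y x) \<and>
     (\<forall>x. (\<forall>y. B x y = 0) \<longrightarrow> x = 0)"

definition self_adjoint :: "(complex^'n \<Rightarrow> complex^'n \<Rightarrow> complex) \<Rightarrow> complex^'n^'n \<Rightarrow> bool" where
  "self_adjoint B T \<longleftrightarrow> (\<forall>x y. B (T *v x) y = B x (T *v y))"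

definition is_eigenvalue :: "complex^'n^'n \<Rightarrow> complex \<Rightarrow> bool" where
  "is_eigenvalue T l \<longleftrightarrow> (\<exists>x. x \<noteq> 0 \<and> T *v x = l *s x)"

definition shifted :: "complex^'n^'n \<Rightarrow> complex \<Rightarrow> complex^'n \<Rightarrow> complex^'n" where
  "shifted T l = (\<lambda>x. T *v x - l *s x)"

definition gen_eigenspace :: "complex^'n^'n \<Rightarrow> complex \<Rightarrow> (complex^'n) set" where
  "gen_eigenspace T l = {x. \<exists>m::nat. m > 0 \<and> (shifted T l ^^ m) x = 0}"

end

theory Submission
  imports Defs
begin

text \<open>Let \<open>S = T - \<lambda>I\<close>. By Fitting's lemma there is an \<open>N\<close> with \<open>K\<^sub>\<lambda> = ker S\<^sup>N\<close> and
  \<open>V = ker S\<^sup>N + range S\<^sup>N\<close>. If \<open>\<langle>S\<^sup>k x, x\<rangle>\<close> vanished on \<open>K\<^sub>\<lambda>\<close>, polarisation (using that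
  \<open>S\<^sup>k\<close> is self-adjoint) would make \<open>S\<^sup>k y\<close> orthogonal to \<open>K\<^sub>\<lambda>\<close> for every \<open>y \<in> K\<^sub>\<lambda>\<close>;
  moreover \<open>\<langle>S\<^sup>k y, S\<^sup>N v\<rangle> = \<langle>S\<^sup>N S\<^sup>k y, v\<rangle> = 0\<close>. So \<open>S\<^sup>k y\<close> is orthogonal to all of \<open>V\<close>,
  and non-degeneracy gives \<open>S\<^sup>k y = 0\<close> on \<open>K\<^sub>\<lambda>\<close>.\<close>
context finite_dimensional_vector_space begin

lemma linear_funpow:
  assumes "Vector_Spaces.linear scale scale f"
  shows "Vector_Spaces.linear scale scale (f ^^ n)"
  by (induction n) (simp_all only: funpow.simps linear_id Vector_Spaces.linear_compose[OF _ assms])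

lemma funpow_kernels_stabilise:
  assumes f: "Vector_Spaces.linear scale scale f"
  obtains N where "\<And>m x. (f ^^ m) x = 0 \<Longrightarrow> (f ^^ N) x = 0"
proof -
  interpret finite_dimensional_vector_space_pair scale Basis scale Basis by unfold_locales
  define ker where "ker j = {x. (f ^^ j) x = 0}" for j
  have subspace_ker: "subspace (ker j)" for j
    unfolding ker_def by (rule linear_subspace_kernel[OF linear_funpow[OF f]])
  have ker_mono: "ker i \<subseteq> ker j" if "i \<le> j" for i j
  proof
    fix x assume "x \<in> ker i"
    have "(f ^^ j) x = (f ^^ (j - i)) ((f ^^ i) x)"
      using that by (metis funpow_add le_add_diff_inverse2 comp_apply)
    then show "x \<in> ker j"
      using \<open>x \<in> ker i\<close> linear_0[OF linear_funpow[OF f]] unfolding ker_def by simp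
  qed
  have "finite (range (\<lambda>j. dim (ker j)))"
    by (rule finite_subset[of _ "{..dimension}"]) (auto simp: dim_subset_UNIV)
  then obtain N where N: "\<And>j. dim (ker j) \<le> dim (ker N)"
    by (metis (mono_tags, lifting) Max_ge Max_in empty_not_UNIV image_iff image_is_empty rangeI)
  have "ker m \<subseteq> ker N" for m
  proof -
    have "ker (max m N) = ker N"
      using subspace_dim_equal[OF subspace_ker subspace_ker ker_mono] N by (metis max.cobounded2)
    then show ?thesis using ker_mono[of m "max m N"] by simp
  qed
  then show thesis using that unfolding ker_def by blast
qed

lemma kernel_plus_range:
  assumes g: "Vector_Spaces.linear scale scale g" and ker2: "\<And>x. g (g x) = 0 \<Longrightarrow> g x = 0"
  obtains a v where "g a = 0" and "w = a + g v"
proof -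
  interpret finite_dimensional_vector_space_pair scale Basis scale Basis by unfold_locales
  define R where "R = range g"
  have subspace_R: "subspace R"
    unfolding R_def by (rule linear_subspace_image[OF g subspace_UNIV])
  have "inj_on g R"
  proof (rule inj_onI)
    fix u u' assume u: "u \<in> R" "u' \<in> R" "g u = g u'"
    obtain v where v: "u - u' = g v"
      using subspace_diff[OF subspace_R u(1,2)] unfolding R_def by auto
    have "g (g v) = 0" using u(3) v linear_diff[OF g] by (metis right_minus_eq)
    then show "u = u'" using ker2 v by (metis right_minus_eq)
  qed
  then have "dim (g ` R) = dim R"
    using dim_image_eq[OF g] span_eq_iff subspace_R by metis
  then have image_R: "g ` R = R"
    using subspace_dim_equal[OF linear_subspace_image[OF g subspace_R] subspace_R]
    unfolding R_def by auto
  obtain v where v: "g w = g (g v)"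
    using image_R unfolding R_def by (metis imageE rangeI)
  show thesis
  proof
    show "g (w - g v) = 0" using v linear_diff[OF g] by simp
  qed simp
qed

end

lemma linear_shifted: "Vector_Spaces.linear (*s) (*s) (shifted T l)"
  unfolding Vector_Spaces.linear_iff shifted_def
  by (simp add: vec.vector_space_axioms matrix_vector_right_distrib vector_ssub_ldistrib
      vec.scale algebra_simps)

lemma scalar_product_add_right:
  assumes "scalar_product B"
  shows "B z (x + y) = B z x + B z y"
  using assms unfolding scalar_product_def by metis

lemma scalar_product_zero_left:
  assumes "scalar_product B"
  shows "B 0 x = 0"
  using assms unfolding scalar_product_def by (metis add_0 add_cancel_right_right)

lemma scalar_product_self_adjoint_shifted:
  assumes "scalar_product B" and "self_adjoint B T"
  shows "B (shifted T l x) y = B x (shifted T l y)"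
proof -
  have diff_left: "B (u - v) w = B u w - B v w" for u v w
    using assms(1) unfolding scalar_product_def by (metis add_diff_cancel eq_diff_eq)
  have diff_right: "B w (u - v) = B w u - B w v" for u v w
    using diff_left assms(1) unfolding scalar_product_def by metis
  have scale_right: "B w (c *s u) = c * B w u" for c u w
    using assms(1) unfolding scalar_product_def by metis
  show ?thesis
    using assms unfolding scalar_product_def self_adjoint_def shifted_def
    by (simp add: diff_left diff_right scale_right)
qed

lemma adjoint_funpow:
  assumes "\<And>x y. B (S x) y = B x (S y)"
  shows "B ((S ^^ j) x) y = B x ((S ^^ j) y)"
proof (induction j arbitrary: x y)
  case (Suc j)
  have "B ((S ^^ Suc j) x) y = B ((S ^^ j) (S x)) y" by (simp add: funpow_swap1)
  also have "\<dots> = B (S x) ((S ^^ j) y)" using Suc by simp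
  finally show ?case using assms by simp
qed simp

lemma scalar_product_polarisation:
  assumes B: "scalar_product B" and A: "\<And>x y. B (A x) y = B x (A y)"
    and A_add: "A (y + u) = A y + A u"
    and "B (A y) y = 0" and "B (A u) u = 0" and "B (A (y + u)) (y + u) = 0"
  shows "B (A y) u = 0"
proof -
  have "B (A (y + u)) (y + u) = B (A y) y + B (A y) u + B (A u) y + B (A u) u"
    using B unfolding A_add scalar_product_def by (simp add: scalar_product_add_right[OF B])
  also have "B (A u) y = B (A y) u" using A B unfolding scalar_product_def by metis
  finally have "2 * B (A y) u = 0" using assms(4-6) by simp
  then show ?thesis by simp
qed

lemma funpow_zero_if_quadratic_form_vanishes:
  assumes B: "scalar_product B" and adjoint: "\<And>x y. B (S x) y = B x (S y)"
    and S: "Vector_Spaces.linear (*s) (*s) S"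
    and decomp: "\<And>w. \<exists>a v. (S ^^ N) a = 0 \<and> w = a + (S ^^ N) v"
    and vanish: "\<And>x. (S ^^ N) x = 0 \<Longrightarrow> B ((S ^^ k) x) x = 0"
    and y: "(S ^^ N) y = 0"
  shows "(S ^^ k) y = 0"
proof -
  have linear_power: "Vector_Spaces.linear (*s) (*s) (S ^^ j)" for j
    by (rule vec.linear_funpow[OF S])
  have adjoint_power: "B ((S ^^ j) x) z = B x ((S ^^ j) z)" for j x z
    by (rule adjoint_funpow[of B S, OF adjoint])
  have orth_kernel: "B ((S ^^ k) y) a = 0" if "(S ^^ N) a = 0" for a
  proof (rule scalar_product_polarisation[where A = "S ^^ k", OF B adjoint_power])
    show "(S ^^ k) (y + a) = (S ^^ k) y + (S ^^ k) a"
      by (rule vec.linear_add[OF linear_power])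
    have "(S ^^ N) (y + a) = 0"
      using y that vec.linear_add[OF linear_power] by simp
    then show "B ((S ^^ k) (y + a)) (y + a) = 0" by (rule vanish)
    show "B ((S ^^ k) y) y = 0" by (rule vanish[OF y])
    show "B ((S ^^ k) a) a = 0" by (rule vanish[OF that])
  qed
  have orth_range: "B ((S ^^ k) y) ((S ^^ N) v) = 0" for v
  proof -
    have "B ((S ^^ k) y) ((S ^^ N) v) = B ((S ^^ N) ((S ^^ k) y)) v"
      by (rule adjoint_power[symmetric])
    also have "(S ^^ N) ((S ^^ k) y) = (S ^^ k) ((S ^^ N) y)"
      by (metis add.commute comp_apply funpow_add)
    also have "\<dots> = 0"
      using y vec.linear_0[OF linear_power] by simp
    finally show ?thesis
      by (simp add: scalar_product_zero_left[OF B])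
  qed
  have "B ((S ^^ k) y) w = 0" for w
  proof -
    obtain a v where "(S ^^ N) a = 0" and "w = a + (S ^^ N) v"
      using decomp by blast
    then show ?thesis
      by (simp add: scalar_product_add_right[OF B] orth_kernel orth_range)
  qed
  then show ?thesis
    using B unfolding scalar_product_def by blast
qed

lemma gen_eigenspace_fitting:
  obtains N where "gen_eigenspace T l = {x. (shifted T l ^^ N) x = 0}"
    and "\<And>w. \<exists>a v. (shifted T l ^^ N) a = 0 \<and> w = a + (shifted T l ^^ N) v"
proof -
  obtain N where N: "\<And>m x. (shifted T l ^^ m) x = 0 \<Longrightarrow> (shifted T l ^^ N) x = 0"
    using vec.funpow_kernels_stabilise[OF linear_shifted] by blast
  have "gen_eigenspace T l = {x. (shifted T l ^^ N) x = 0}"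
  proof (intro equalityI subsetI)
    fix x assume "x \<in> {x. (shifted T l ^^ N) x = 0}"
    then have "(shifted T l ^^ Suc N) x = 0"
      using vec.linear_0[OF linear_shifted] by simp
    then show "x \<in> gen_eigenspace T l" unfolding gen_eigenspace_def by blast
  qed (use N in \<open>auto simp: gen_eigenspace_def\<close>)
  moreover have "\<exists>a v. (shifted T l ^^ N) a = 0 \<and> w = a + (shifted T l ^^ N) v" for w
    using vec.kernel_plus_range[OF vec.linear_funpow[OF linear_shifted], of N]
    by (metis N comp_apply funpow_add)
  ultimately show thesis using that by blast
qed

theorem mainTheorem4:
  fixes B :: "complex^'n \<Rightarrow> complex^'n \<Rightarrow> complex"
    and T :: "complex^'n^'n" and l :: complex and k :: nat
  assumes "scalar_product B"
    and "self_adjoint B T"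
    and "is_eigenvalue T l"
    and "\<exists>y \<in> gen_eigenspace T l. (shifted T l ^^ k) y \<noteq> 0"
  shows "\<exists>x \<in> gen_eigenspace T l. B ((shifted T l ^^ k) x) x \<noteq> 0"
proof (rule ccontr)
  assume no_witness: "\<not> ?thesis"
  obtain N where K: "gen_eigenspace T l = {x. (shifted T l ^^ N) x = 0}"
    and decomp: "\<And>w. \<exists>a v. (shifted T l ^^ N) a = 0 \<and> w = a + (shifted T l ^^ N) v"
    using gen_eigenspace_fitting[of T l] by blast
  obtain y where y: "(shifted T l ^^ N) y = 0" "(shifted T l ^^ k) y \<noteq> 0"
    using assms(4) K by auto
  have "(shifted T l ^^ k) y = 0"
  proof (rule funpow_zero_if_quadratic_form_vanishes[OF assms(1) _ linear_shifted decomp _ y(1)])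
    show "B (shifted T l x) z = B x (shifted T l z)" for x z
      by (rule scalar_product_self_adjoint_shifted[OF assms(1,2)])
    show "B ((shifted T l ^^ k) x) x = 0" if "(shifted T l ^^ N) x = 0" for x
      using no_witness that K by auto
  qed
  with y(2) show False by simp
qed

end
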